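(* Let $x,y\in(0,1)$ and $n\in\mathbb{N}$. Let $X,X_1,X_2,Y,Y_1,Y_2$ be random variables with $X,X_1,X_2\sim B(n,x)$ and $Y,Y_1,Y_2\sim B(n,y)$, such that $X,Y$ are independent, $X_1,X_2$ are independent, and $Y_1,Y_2$ are independent. Then \[ F_{X+Y}\leqslant_{\mathrm{cx}}\tfrac12\bigl(F_{X_1+X_2}+F_{Y_1+Y_2}\bigr), \] i.e. $\mathbb{E}\,f(X+Y)\le \tfrac12\bigl(\mathbb{E}\,f(X_1+X_2)+\mathbb{E}\,f(Y_1+Y_2)\bigr)$ for every convex $f:\mathbb{R}\to\mathbb{R}$.
   Context: $B(n,p)$ denotes the binomial distribution with parameters $n\in\mathbb{N}$, $p\in(0,1)$: $P(X=k)=\binom nk p^k(1-p)^{n-k}$, $k=0,\dots,n$. $F_X(t)=P(X<t)$ is the distribution function of $X$. For distribution functions $G,H$ (of probability measures on $\mathbb{R}$ with finite first moment) one writes $G\leqslant_{\mathrm{cx}}H$ if $\int f\,dG\le\int f\,dH$ for all convex $f:\mathbb{R}\to\mathbb{R}$ for which the integrals exist; for random variables, $X\leqslant_{\mathrm{cx}}Y$ means $F_X\leqslant_{\mathrm{cx}}F_Y$, i.e. $\mathbb{E} f(X)\le\mathbb{E} f(Y)$ for all such convex $f$. A convex combination of distribution functions such as $\tfrac12(F_{X_1+X_2}+F_{Y_1+Y_2})$ is the distribution function of the corresponding mixture. *)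

theory Defs
  imports "HOL-Probability.Probability"
begin

end

theory Submission
  imports Defs
begin

text \<open>
  Write \<open>a\<close>, \<open>b\<close> for the binomial weights with parameters \<open>x\<close>, \<open>y\<close> and \<open>h m = f m\<close>.
  Twice the gap between the two sides of the inequality is the quadratic form
  \<open>\<Sum>i j. d\<^sub>i d\<^sub>j h(i + j)\<close> in \<open>d = a - b\<close>, which has total mass \<open>0\<close>.
  Summation by parts in both indices turns it into
  \<open>\<Sum>i j. D\<^sub>i D\<^sub>j \<Delta>\<^sup>2h(i + j)\<close>, where \<open>D\<close> are the partial sums of \<open>d\<close>.
  Convexity of \<open>f\<close> makes \<open>\<Delta>\<^sup>2h \<ge> 0\<close>, and since the binomial distribution
  function is monotone in the success probability, all \<open>D\<^sub>i\<close> have the same sign.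
\<close>

lemma sum_atMost_by_parts:
  fixes d u :: "nat \<Rightarrow> 'a::comm_ring_1"
  shows "(\<Sum>i\<le>n. d i * u i) = (\<Sum>i\<le>n. d i) * u n - (\<Sum>i<n. (\<Sum>k\<le>i. d k) * (u (Suc i) - u i))"
  by (induction n) (simp_all add: algebra_simps)

lemma double_sum_by_parts:
  fixes d h :: "nat \<Rightarrow> 'a::comm_ring_1"
  assumes "(\<Sum>i\<le>n. d i) = 0"
  shows "(\<Sum>i\<le>n. \<Sum>j\<le>n. d i * d j * h (i + j))
       = (\<Sum>i<n. \<Sum>j<n. (\<Sum>k\<le>i. d k) * (\<Sum>k\<le>j. d k)
                          * (h (i + j) - 2 * h (Suc (i + j)) + h (Suc (Suc (i + j)))))"
proof -
  define D where "D i = (\<Sum>k\<le>i. d k)" for i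
  define G where "G i = - (\<Sum>j<n. D j * (h (i + Suc j) - h (i + j)))" for i
  have inner: "(\<Sum>j\<le>n. d j * h (i + j)) = G i" for i
    using sum_atMost_by_parts[of d "\<lambda>j. h (i + j)" n] assms by (simp add: G_def D_def)
  have G_diff: "G (Suc i) - G i
      = - (\<Sum>j<n. D j * (h (i + j) - 2 * h (Suc (i + j)) + h (Suc (Suc (i + j)))))" for i
    unfolding G_def by (simp add: sum_subtractf[symmetric] algebra_simps sum_negf[symmetric])
  have "(\<Sum>i\<le>n. \<Sum>j\<le>n. d i * d j * h (i + j)) = (\<Sum>i\<le>n. d i * G i)"
    by (simp add: sum_distrib_left mult.assoc flip: inner)
  also have "\<dots> = - (\<Sum>i<n. D i * (G (Suc i) - G i))"
    using sum_atMost_by_parts[of d G n] assms by (simp add: D_def)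
  also have "\<dots> = (\<Sum>i<n. \<Sum>j<n. D i * D j
                    * (h (i + j) - 2 * h (Suc (i + j)) + h (Suc (Suc (i + j)))))"
    by (simp add: G_diff sum_negf sum_distrib_left mult.assoc)
  finally show ?thesis by (simp add: D_def)
qed

lemma convex_double_sum_mixture:
  fixes a b h :: "nat \<Rightarrow> real"
  assumes mass: "(\<Sum>i\<le>n. a i) = (\<Sum>i\<le>n. b i)"
    and ordered: "(\<forall>i. (\<Sum>k\<le>i. a k) \<le> (\<Sum>k\<le>i. b k)) \<or> (\<forall>i. (\<Sum>k\<le>i. b k) \<le> (\<Sum>k\<le>i. a k))"
    and convex: "\<And>m. 0 \<le> h m - 2 * h (Suc m) + h (Suc (Suc m))"
  shows "2 * (\<Sum>i\<le>n. \<Sum>j\<le>n. h (i + j) * a i * b j)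
       \<le> (\<Sum>i\<le>n. \<Sum>j\<le>n. h (i + j) * a i * a j) + (\<Sum>i\<le>n. \<Sum>j\<le>n. h (i + j) * b i * b j)"
proof -
  define d where "d i = a i - b i" for i
  have partial_sums: "0 \<le> (\<Sum>k\<le>i. d k) * (\<Sum>k\<le>j. d k)" for i j
    using ordered by (auto simp: d_def sum_subtractf intro: mult_nonneg_nonneg mult_nonpos_nonpos)
  have "0 \<le> (\<Sum>i\<le>n. \<Sum>j\<le>n. d i * d j * h (i + j))"
    using mass partial_sums convex
    by (subst double_sum_by_parts) (auto simp: d_def sum_subtractf intro!: sum_nonneg)
  also have "\<dots> = (\<Sum>i\<le>n. \<Sum>j\<le>n. h (i + j) * a i * a j) + (\<Sum>i\<le>n. \<Sum>j\<le>n. h (i + j) * b i * b j)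
      - (\<Sum>i\<le>n. \<Sum>j\<le>n. h (i + j) * a i * b j) - (\<Sum>i\<le>n. \<Sum>j\<le>n. h (i + j) * b i * a j)"
    by (simp add: d_def sum.distrib[symmetric] sum_subtractf[symmetric] algebra_simps)
  also have "(\<Sum>i\<le>n. \<Sum>j\<le>n. h (i + j) * b i * a j) = (\<Sum>i\<le>n. \<Sum>j\<le>n. h (i + j) * a i * b j)"
    by (subst sum.swap) (simp add: add.commute mult.commute mult.left_commute)
  finally show ?thesis by simp
qed

lemma convex_on_second_difference_nonneg:
  fixes f :: "real \<Rightarrow> real"
  assumes "convex_on UNIV f"
  shows "0 \<le> f t - 2 * f (t + 1) + f (t + 2)"
proof -
  have "f ((1 - 1/2) *\<^sub>R t + (1/2) *\<^sub>R (t + 2)) \<le> (1 - 1/2) * f t + (1/2) * f (t + 2)"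
    using assms by (intro convex_onD) auto
  moreover have "(1 - 1/2) *\<^sub>R t + (1/2) *\<^sub>R (t + 2) = t + 1"
    by (simp add: field_simps)
  ultimately show ?thesis by simp
qed

lemma Bernstein_Suc_0: "Bernstein (Suc n) 0 x = (1 - x) * Bernstein n 0 x"
  by (simp add: Bernstein_def)

lemma Bernstein_Suc_Suc:
  "Bernstein (Suc n) (Suc k) x = (1 - x) * Bernstein n (Suc k) x + x * Bernstein n k x"
proof (cases "k < n")
  case True
  then have "n - k = Suc (n - Suc k)" by simp
  with True show ?thesis by (simp add: Bernstein_def algebra_simps)
next
  case False
  then consider "k = n" | "n < k" by linarith
  then show ?thesis by cases (simp_all add: Bernstein_def binomial_eq_0 del: binomial_Suc_Suc)
qed

lemma sum_atMost_Bernstein_Suc: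
  "(\<Sum>i\<le>k. Bernstein (Suc n) i x) = (1 - x) * (\<Sum>i\<le>k. Bernstein n i x) + x * (\<Sum>i<k. Bernstein n i x)"
  by (induction k) (simp_all add: Bernstein_Suc_0 Bernstein_Suc_Suc algebra_simps)

lemma sum_atMost_Bernstein_antimono:
  assumes "0 \<le> x" "x \<le> y" "y \<le> 1"
  shows "(\<Sum>i\<le>k. Bernstein n i y) \<le> (\<Sum>i\<le>k. Bernstein n i x)"
proof (induction n arbitrary: k)
  case 0
  have "(\<Sum>i\<le>k. Bernstein 0 i z) = 1" for z
    by (induction k) (simp_all add: Bernstein_def)
  then show ?case by simp
next
  case (Suc n)
  have below: "(\<Sum>i<k. Bernstein n i y) \<le> (\<Sum>i<k. Bernstein n i x)"
    using Suc.IH by (cases k) (simp_all add: lessThan_Suc_atMost)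
  have "(1 - y) * (\<Sum>i\<le>k. Bernstein n i y) + y * (\<Sum>i<k. Bernstein n i y)
      \<le> (1 - x) * (\<Sum>i\<le>k. Bernstein n i y) + x * (\<Sum>i<k. Bernstein n i y)"
    using mult_nonneg_nonneg[OF _ Bernstein_nonneg, of "y - x" y n k] assms
    by (simp add: lessThan_Suc_atMost[symmetric] algebra_simps)
  also have "\<dots> \<le> (1 - x) * (\<Sum>i\<le>k. Bernstein n i x) + x * (\<Sum>i<k. Bernstein n i x)"
    using Suc.IH[of k] below assms by (intro add_mono mult_left_mono) auto
  finally show ?case by (simp add: sum_atMost_Bernstein_Suc)
qed

lemma measure_pmf_pair_pmf:
  fixes A :: "'a::countable pmf" and B :: "'b::countable pmf"
  shows "measure_pmf A \<Otimes>\<^sub>M measure_pmf B = measure_pmf (pair_pmf A B)"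
proof (rule pair_measure_eqI)
  show "sigma_finite_measure (measure_pmf A)" "sigma_finite_measure (measure_pmf B)"
    by (simp_all add: prob_space_imp_sigma_finite prob_space_measure_pmf)
  have "sets (measure_pmf A \<Otimes>\<^sub>M measure_pmf B) = sets (count_space UNIV \<Otimes>\<^sub>M count_space UNIV)"
    by (rule sets_pair_measure_cong) auto
  also have "\<dots> = UNIV"
    by (subst pair_measure_countable) auto
  finally show "sets (measure_pmf A \<Otimes>\<^sub>M measure_pmf B) = sets (measure_pmf (pair_pmf A B))"
    by simp
  fix S T
  have "emeasure (measure_pmf (pair_pmf A B)) (S \<times> T)
      = (\<integral>\<^sup>+a. \<integral>\<^sup>+b. indicator S a * indicator T b \<partial>B \<partial>A)"
    by (simp add: nn_integral_pair_pmf' indicator_times flip: nn_integral_indicator)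
  also have "\<dots> = emeasure A S * emeasure B T"
    by (simp add: nn_integral_cmult nn_integral_multc)
  finally show "emeasure A S * emeasure B T = emeasure (measure_pmf (pair_pmf A B)) (S \<times> T)"
    by simp
qed

lemma expectation_indep_var_pair_pmf:
  fixes X Y :: "'a \<Rightarrow> 'b::countable" and g :: "'b \<Rightarrow> 'b \<Rightarrow> real"
  assumes "prob_space M"
    and "distr M (count_space UNIV) X = measure_pmf A"
    and "distr M (count_space UNIV) Y = measure_pmf B"
    and "prob_space.indep_var M (count_space UNIV) X (count_space UNIV) Y"
  shows "prob_space.expectation M (\<lambda>\<omega>. g (X \<omega>) (Y \<omega>))
       = measure_pmf.expectation (pair_pmf A B) (case_prod g)"
proof -
  interpret prob_space M by fact
  have "random_variable (count_space UNIV) X" "random_variable (count_space UNIV) Y"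
    and joint: "distr M (count_space UNIV) X \<Otimes>\<^sub>M distr M (count_space UNIV) Y
              = distr M (count_space UNIV \<Otimes>\<^sub>M count_space UNIV) (\<lambda>\<omega>. (X \<omega>, Y \<omega>))"
    using assms(4) indep_var_distribution_eq by blast+
  then have pair_measurable: "(\<lambda>\<omega>. (X \<omega>, Y \<omega>)) \<in> measurable M (count_space UNIV \<Otimes>\<^sub>M count_space UNIV)"
    by (intro measurable_Pair) auto
  have "expectation (\<lambda>\<omega>. g (X \<omega>) (Y \<omega>))
      = integral\<^sup>L (distr M (count_space UNIV \<Otimes>\<^sub>M count_space UNIV) (\<lambda>\<omega>. (X \<omega>, Y \<omega>))) (case_prod g)"
    by (subst integral_distr[OF pair_measurable]) (auto simp: pair_measure_countable)
  also have "\<dots> = measure_pmf.expectation (pair_pmf A B) (case_prod g)"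
    by (simp add: assms(2,3) measure_pmf_pair_pmf flip: joint)
  finally show ?thesis .
qed

lemma expectation_pair_binomial_pmf:
  assumes "p \<in> {0..1}" "q \<in> {0..1}"
  shows "measure_pmf.expectation (pair_pmf (binomial_pmf n p) (binomial_pmf n q)) (case_prod g)
       = (\<Sum>i\<le>n. \<Sum>j\<le>n. g i j * Bernstein n i p * Bernstein n j q)"
proof -
  have "set_pmf (binomial_pmf n r) \<subseteq> {..n}" if "r \<in> {0..1}" for r
    using that by (auto simp: set_pmf_binomial_eq)
  then have "measure_pmf.expectation (pair_pmf (binomial_pmf n p) (binomial_pmf n q)) (case_prod g)
      = (\<Sum>ij\<in>{..n} \<times> {..n}. case_prod g ij * pmf (pair_pmf (binomial_pmf n p) (binomial_pmf n q)) ij)"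
    using assms by (intro integral_measure_pmf_real) auto
  also have "\<dots> = (\<Sum>(i, j)\<in>{..n} \<times> {..n}. g i j * Bernstein n i p * Bernstein n j q)"
    using assms by (intro sum.cong) (auto simp: pmf_pair Bernstein_def)
  finally show ?thesis
    by (simp add: sum.cartesian_product)
qed

lemma expectation_indep_binomial:
  fixes U V :: "'a \<Rightarrow> nat"
  assumes "prob_space M" and "p \<in> {0..1}" "q \<in> {0..1}"
    and "distr M (count_space UNIV) U = measure_pmf (binomial_pmf n p)"
    and "distr M (count_space UNIV) V = measure_pmf (binomial_pmf n q)"
    and "prob_space.indep_var M (count_space UNIV) U (count_space UNIV) V"
  shows "prob_space.expectation M (\<lambda>\<omega>. g (U \<omega>) (V \<omega>))
       = (\<Sum>i\<le>n. \<Sum>j\<le>n. g i j * Bernstein n i p * Bernstein n j q)"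
  using assms by (simp add: expectation_indep_var_pair_pmf expectation_pair_binomial_pmf)

theorem theorem2:
  fixes M :: "'a measure" and X X1 X2 Y Y1 Y2 :: "'a \<Rightarrow> nat"
    and x y :: real and n :: nat and f :: "real \<Rightarrow> real"
  assumes "prob_space M"
    and "0 < x" "x < 1" "0 < y" "y < 1"
    and "distr M (count_space UNIV) X = measure_pmf (binomial_pmf n x)"
    and "distr M (count_space UNIV) X1 = measure_pmf (binomial_pmf n x)"
    and "distr M (count_space UNIV) X2 = measure_pmf (binomial_pmf n x)"
    and "distr M (count_space UNIV) Y = measure_pmf (binomial_pmf n y)"
    and "distr M (count_space UNIV) Y1 = measure_pmf (binomial_pmf n y)"
    and "distr M (count_space UNIV) Y2 = measure_pmf (binomial_pmf n y)"
    and "prob_space.indep_var M (count_space UNIV) X (count_space UNIV) Y"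
    and "prob_space.indep_var M (count_space UNIV) X1 (count_space UNIV) X2"
    and "prob_space.indep_var M (count_space UNIV) Y1 (count_space UNIV) Y2"
    and "convex_on UNIV f"
  shows "prob_space.expectation M (\<lambda>\<omega>. f (real (X \<omega> + Y \<omega>)))
         \<le> (prob_space.expectation M (\<lambda>\<omega>. f (real (X1 \<omega> + X2 \<omega>)))
             + prob_space.expectation M (\<lambda>\<omega>. f (real (Y1 \<omega> + Y2 \<omega>)))) / 2"
proof -
  define h where "h m = f (real m)" for m
  have "(\<forall>i. (\<Sum>k\<le>i. Bernstein n k x) \<le> (\<Sum>k\<le>i. Bernstein n k y))
      \<or> (\<forall>i. (\<Sum>k\<le>i. Bernstein n k y) \<le> (\<Sum>k\<le>i. Bernstein n k x))"
    using assms(2-5) by (cases "x \<le> y") (auto intro: sum_atMost_Bernstein_antimono)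
  moreover have "0 \<le> h m - 2 * h (Suc m) + h (Suc (Suc m))" for m
    using convex_on_second_difference_nonneg[OF assms(15), of "real m"]
    by (simp add: h_def add.commute)
  ultimately have "2 * (\<Sum>i\<le>n. \<Sum>j\<le>n. h (i + j) * Bernstein n i x * Bernstein n j y)
      \<le> (\<Sum>i\<le>n. \<Sum>j\<le>n. h (i + j) * Bernstein n i x * Bernstein n j x)
        + (\<Sum>i\<le>n. \<Sum>j\<le>n. h (i + j) * Bernstein n i y * Bernstein n j y)"
    by (intro convex_double_sum_mixture) simp_all
  moreover have "prob_space.expectation M (\<lambda>\<omega>. f (real (X \<omega> + Y \<omega>)))
      = (\<Sum>i\<le>n. \<Sum>j\<le>n. h (i + j) * Bernstein n i x * Bernstein n j y)"
    unfolding h_def using assms(2-5)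
    by (intro expectation_indep_binomial[OF assms(1) _ _ assms(6,9,12)]) auto
  moreover have "prob_space.expectation M (\<lambda>\<omega>. f (real (X1 \<omega> + X2 \<omega>)))
      = (\<Sum>i\<le>n. \<Sum>j\<le>n. h (i + j) * Bernstein n i x * Bernstein n j x)"
    unfolding h_def using assms(2,3)
    by (intro expectation_indep_binomial[OF assms(1) _ _ assms(7,8,13)]) auto
  moreover have "prob_space.expectation M (\<lambda>\<omega>. f (real (Y1 \<omega> + Y2 \<omega>)))
      = (\<Sum>i\<le>n. \<Sum>j\<le>n. h (i + j) * Bernstein n i y * Bernstein n j y)"
    unfolding h_def using assms(4,5)
    by (intro expectation_indep_binomial[OF assms(1) _ _ assms(10,11,14)]) auto
  ultimately show ?thesis
    by (simp del: of_nat_add)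
qed

end
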